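(* Let $r\ge2$, $N\ge r-1$, $d\ge1$ be integers. For any almost $r$-injective function $f\colon\Delta_N\to\mathbb{R}^d$, we have $$\delta(f)\ge\sqrt{2}\cdot\sin\big(\alpha^{(r)}(f)/2\big)\cdot\kappa^{(r)}(f).$$
   Context: $\Delta_N$ is the geometric $N$-simplex. $f$ is almost $r$-injective if for any $r$ pairwise disjoint faces $\sigma_1,\dots,\sigma_r$ of $\Delta_N$, $f(\sigma_1)\cap\dots\cap f(\sigma_r)=\emptyset$. $\mathrm{Conf}_r^{\Delta}(\Delta_N)=\{(x_1,\dots,x_r)\in(\Delta_N)^{\times r}: \text{the } x_i \text{ lie in pairwise disjoint faces}\}$ with the subspace topology. $W_r^{\oplus d}=\{(z_1,\dots,z_r)\in(\mathbb{R}^d)^{\oplus r}: \sum z_i=0\}$, $S(W_r^{\oplus d})$ its unit sphere with geodesic metric $d(u,v)=\arccos\langle u,v\rangle$, $\nu(v)=v/\|v\|$. $\mathrm{Conf}_r^{\Delta}(f)(x_1,\dots,x_r)=\big(f(x_i)-\tfrac1r\sum_jf(x_j)\big)_{i=1}^r$, and $\alpha^{(r)}(f)=\delta(\nu\circ\mathrm{Conf}_r^{\Delta}(f))$. $\kappa^{(r)}(f)=\inf_{(x_1,\dots,x_r)\in\mathrm{Conf}_r^{\Delta}(\Delta_N)}\frac1r\sqrt{\sum_{i,j=1}^r\|f(x_i)-f(x_j)\|^2}$. For a topological space $X$ and metric space $Y$, $\delta(h)=\inf\{\delta\ge 0 : \text{for every } x\in X \text{ there is an open neighborhood } U_x \text{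 with } \operatorname{diam}(h(U_x))\le\delta\}$; $\delta(f)$ uses the Euclidean metric on $\mathbb{R}^d$. *)

theory Defs
  imports "HOL-Analysis.Analysis"
begin

text \<open>Geometric N-simplex, realised in R^(N+1) as functions nat => real supported on {0..N}
  (the product topology on nat => real restricts to the Euclidean topology here).\<close>
definition Delta :: "nat \<Rightarrow> (nat \<Rightarrow> real) set" where
  "Delta N = {x. (\<forall>i. N < i \<longrightarrow> x i = 0) \<and> (\<forall>i\<le>N. 0 \<le> x i) \<and> (\<Sum>i\<le>N. x i) = 1}"

definition sface :: "nat \<Rightarrow> nat set \<Rightarrow> (nat \<Rightarrow> real) set" where
  "sface N T = {x \<in> Delta N. \<forall>i. i \<notin> T \<longrightarrow> x i = 0}"

definition is_face_index :: "nat \<Rightarrow> nat set \<Rightarrow> bool" where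
  "is_face_index N T \<longleftrightarrow> T \<noteq> {} \<and> T \<subseteq> {..N}"

definition almost_r_injective :: "nat \<Rightarrow> nat \<Rightarrow> ((nat \<Rightarrow> real) \<Rightarrow> 'a) \<Rightarrow> bool" where
  "almost_r_injective r N f \<longleftrightarrow>
     (\<forall>\<sigma> :: nat \<Rightarrow> nat set.
        (\<forall>i<r. is_face_index N (\<sigma> i)) \<and> (\<forall>i<r. \<forall>j<r. i \<noteq> j \<longrightarrow> \<sigma> i \<inter> \<sigma> j = {})
        \<longrightarrow> (\<Inter>i\<in>{..<r}. f ` sface N (\<sigma> i)) = {})"

text \<open>Conf_r^Delta(Delta_N): r-tuples (x_0..x_{r-1}) encoded as functions nat => point,
  with the unused coordinates i >= r fixed to 0; subspace of the product topology.\<close>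
definition conf_simplex :: "nat \<Rightarrow> nat \<Rightarrow> (nat \<Rightarrow> (nat \<Rightarrow> real)) set" where
  "conf_simplex r N = {x. (\<forall>i. r \<le> i \<longrightarrow> x i = (\<lambda>_. 0)) \<and>
     (\<exists>\<sigma> :: nat \<Rightarrow> nat set. (\<forall>i<r. is_face_index N (\<sigma> i) \<and> x i \<in> sface N (\<sigma> i)) \<and>
        (\<forall>i<r. \<forall>j<r. i \<noteq> j \<longrightarrow> \<sigma> i \<inter> \<sigma> j = {}))}"

definition diamE :: "('b \<Rightarrow> 'b \<Rightarrow> real) \<Rightarrow> 'b set \<Rightarrow> ereal" where
  "diamE dm S = Sup {ereal (dm a b) | a b. a \<in> S \<and> b \<in> S}"

definition delta_gen :: "'c topology \<Rightarrow> ('b \<Rightarrow> 'b \<Rightarrow> real) \<Rightarrow> ('c \<Rightarrow> 'b) \<Rightarrow> ereal" where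
  "delta_gen X dm h = Inf {\<delta>. 0 \<le> \<delta> \<and>
     (\<forall>x\<in>topspace X. \<exists>U. openin X U \<and> x \<in> U \<and> diamE dm (h ` U) \<le> \<delta>)}"

definition delta_fun :: "nat \<Rightarrow> ((nat \<Rightarrow> real) \<Rightarrow> 'a::euclidean_space) \<Rightarrow> ereal" where
  "delta_fun N f = delta_gen (top_of_set (Delta N)) dist f"

text \<open>Elements of W_r^{(+)d} as functions nat => R^d (only i < r matter).
  Inner product and norm of the direct sum.\<close>
definition inner_W :: "nat \<Rightarrow> (nat \<Rightarrow> 'a::euclidean_space) \<Rightarrow> (nat \<Rightarrow> 'a) \<Rightarrow> real" where
  "inner_W r u v = (\<Sum>i<r. inner (u i) (v i))"

definition norm_W :: "nat \<Rightarrow> (nat \<Rightarrow> 'a::euclidean_space) \<Rightarrow> real" where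
  "norm_W r v = sqrt (inner_W r v v)"

definition geodist :: "nat \<Rightarrow> (nat \<Rightarrow> 'a::euclidean_space) \<Rightarrow> (nat \<Rightarrow> 'a) \<Rightarrow> real" where
  "geodist r u v = arccos (inner_W r u v)"

definition nu_W :: "nat \<Rightarrow> (nat \<Rightarrow> 'a::euclidean_space) \<Rightarrow> (nat \<Rightarrow> 'a)" where
  "nu_W r v = (\<lambda>i. v i /\<^sub>R norm_W r v)"

definition conf_map :: "nat \<Rightarrow> ((nat \<Rightarrow> real) \<Rightarrow> 'a::euclidean_space) \<Rightarrow>
    (nat \<Rightarrow> (nat \<Rightarrow> real)) \<Rightarrow> (nat \<Rightarrow> 'a)" where
  "conf_map r f x = (\<lambda>i. if i < r then f (x i) - (1 / real r) *\<^sub>R (\<Sum>j<r. f (x j)) else 0)"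

text \<open>alpha^(r)(f); it is finite (at most pi) when f is almost r-injective.\<close>
definition alpha_r :: "nat \<Rightarrow> nat \<Rightarrow> ((nat \<Rightarrow> real) \<Rightarrow> 'a::euclidean_space) \<Rightarrow> real" where
  "alpha_r r N f = real_of_ereal
     (delta_gen (top_of_set (conf_simplex r N)) (geodist r) (nu_W r \<circ> conf_map r f))"

definition kappa_r :: "nat \<Rightarrow> nat \<Rightarrow> ((nat \<Rightarrow> real) \<Rightarrow> 'a::euclidean_space) \<Rightarrow> real" where
  "kappa_r r N f = Inf ((\<lambda>x. (1 / real r) *
      sqrt (\<Sum>i<r. \<Sum>j<r. (norm (f (x i) - f (x j)))\<^sup>2)) ` conf_simplex r N)"

end

theory Submission
  imports Defs
begin

text \<open>Let every point of \<open>\<Delta>\<^sub>N\<close> have a neighbourhood on which \<open>f\<close> varies by at most \<open>d\<close>.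
  Then every configuration \<open>(x\<^sub>i)\<close> has a neighbourhood on which each \<open>f x\<^sub>i\<close> moves by at most
  \<open>d\<close>, so the centred image in \<open>W\<close> moves by at most \<open>\<surd>r d\<close>; by
  \<open>\<Sum>\<^sub>i |a\<^sub>i - mean a|\<^sup>2 = (1/2r) \<Sum>\<^sub>i\<^sub>j |a\<^sub>i - a\<^sub>j|\<^sup>2\<close> its norm is at least \<open>\<surd>(r/2) \<kappa>\<close>.
  Normalising two vectors of norm \<open>\<ge> s\<close> at distance \<open>\<le> e\<close> yields an angle \<open>\<theta>\<close> with
  \<open>cos \<theta> \<ge> 1 - e\<^sup>2/2s\<^sup>2 = 1 - d\<^sup>2/\<kappa>\<^sup>2\<close>, hence \<open>\<alpha> \<le> \<theta>\<close> and
  \<open>\<surd>2 sin (\<alpha>/2) \<kappa> \<le> \<surd>(1 - cos \<theta>) \<kappa> \<le> d\<close>.\<close>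

definition locally_diam_le :: "'c topology \<Rightarrow> ('b \<Rightarrow> 'b \<Rightarrow> real) \<Rightarrow> ('c \<Rightarrow> 'b) \<Rightarrow> real \<Rightarrow> bool"
  where "locally_diam_le X dm h c \<longleftrightarrow>
    (\<forall>x\<in>topspace X. \<exists>U. openin X U \<and> x \<in> U \<and> (\<forall>a\<in>U. \<forall>b\<in>U. dm (h a) (h b) \<le> c))"

lemma diamE_le_ereal_iff: "diamE dm S \<le> ereal c \<longleftrightarrow> (\<forall>a\<in>S. \<forall>b\<in>S. dm a b \<le> c)"
  unfolding diamE_def by (auto simp: Sup_le_iff) fastforce

lemma delta_gen_le:
  assumes "0 \<le> c" and "locally_diam_le X dm h c"
  shows "delta_gen X dm h \<le> ereal c"
  unfolding delta_gen_def
  using assms by (intro Inf_lower) (auto simp: locally_diam_le_def diamE_le_ereal_iff)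

lemma delta_gen_nonneg: "0 \<le> delta_gen X dm h"
  unfolding delta_gen_def by (intro Inf_greatest) auto

lemma ereal_le_delta_gen:
  assumes "\<And>c. 0 \<le> c \<Longrightarrow> locally_diam_le X dm h c \<Longrightarrow> R \<le> c"
  shows "ereal R \<le> delta_gen X dm h"
  unfolding delta_gen_def
proof (rule Inf_greatest, clarify)
  fix \<delta> :: ereal
  assume "0 \<le> \<delta>" and nbhd: "\<forall>x\<in>topspace X. \<exists>U. openin X U \<and> x \<in> U \<and> diamE dm (h ` U) \<le> \<delta>"
  then show "ereal R \<le> \<delta>"
  proof (cases \<delta>)
    case (real c)
    with nbhd have "locally_diam_le X dm h c"
      by (auto simp: locally_diam_le_def diamE_le_ereal_iff)
    with \<open>0 \<le> \<delta>\<close> real assms show ?thesis by simp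
  qed auto
qed

lemma sum_norm_sub_mean_sq:
  fixes a :: "nat \<Rightarrow> 'a::real_inner"
  assumes "0 < r"
  shows "(\<Sum>i<r. (norm (a i - (1 / real r) *\<^sub>R (\<Sum>j<r. a j)))\<^sup>2)
       = (\<Sum>i<r. (norm (a i))\<^sup>2) - (norm (\<Sum>j<r. a j))\<^sup>2 / real r"
proof -
  define S where "S = (\<Sum>j<r. a j)"
  define c where "c = (1 / real r) *\<^sub>R S"
  have expand: "(norm (a i - c))\<^sup>2 = (norm (a i))\<^sup>2 - 2 * inner (a i) c + (norm c)\<^sup>2" for i
    by (simp add: power2_norm_eq_inner inner_diff_left inner_diff_right inner_commute)
  have "(\<Sum>i<r. (norm (a i - c))\<^sup>2) = (\<Sum>i<r. (norm (a i))\<^sup>2) - 2 * inner S c + real r * (norm c)\<^sup>2"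
    by (simp add: expand sum.distrib sum_subtractf S_def inner_sum_left sum_distrib_left)
  also have "inner S c = (norm S)\<^sup>2 / real r"
    by (simp add: c_def power2_norm_eq_inner)
  also have "real r * (norm c)\<^sup>2 = (norm S)\<^sup>2 / real r"
    using assms by (simp add: c_def power2_eq_square field_simps)
  finally show ?thesis by (simp add: S_def c_def)
qed

lemma sum_sum_norm_diff_sq:
  fixes a :: "nat \<Rightarrow> 'a::real_inner"
  shows "(\<Sum>i<r. \<Sum>j<r. (norm (a i - a j))\<^sup>2)
       = 2 * real r * (\<Sum>i<r. (norm (a i))\<^sup>2) - 2 * (norm (\<Sum>j<r. a j))\<^sup>2"
proof -
  have expand: "(norm (a i - a j))\<^sup>2 = (norm (a i))\<^sup>2 + (norm (a j))\<^sup>2 - 2 * inner (a i) (a j)" for i j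
    by (simp add: power2_norm_eq_inner inner_diff_left inner_diff_right inner_commute)
  have cross: "(\<Sum>i<r. \<Sum>j<r. inner (a i) (a j)) = (norm (\<Sum>j<r. a j))\<^sup>2"
    by (simp add: power2_norm_eq_inner inner_sum_left inner_sum_right) (rule sum.swap)
  show ?thesis
    by (simp add: expand sum.distrib sum_subtractf cross[symmetric] sum_distrib_left mult.assoc)
qed

lemma sum_norm_sub_mean_sq_le:
  fixes a :: "nat \<Rightarrow> 'a::real_inner"
  assumes "0 < r"
  shows "(\<Sum>i<r. (norm (a i - (1 / real r) *\<^sub>R (\<Sum>j<r. a j)))\<^sup>2) \<le> (\<Sum>i<r. (norm (a i))\<^sup>2)"
  using sum_norm_sub_mean_sq[OF assms, of a] assms by simp

lemma sum_norm_sub_mean_sq_eq_pairs: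
  fixes a :: "nat \<Rightarrow> 'a::real_inner"
  assumes "0 < r"
  shows "(\<Sum>i<r. (norm (a i - (1 / real r) *\<^sub>R (\<Sum>j<r. a j)))\<^sup>2)
       = (\<Sum>i<r. \<Sum>j<r. (norm (a i - a j))\<^sup>2) / (2 * real r)"
  using sum_norm_sub_mean_sq[OF assms, of a] sum_sum_norm_diff_sq[of a r] assms
  by (simp add: field_simps)

lemma inner_W_self: "inner_W r u u = (\<Sum>i<r. (norm (u i))\<^sup>2)"
  unfolding inner_W_def by (simp add: power2_norm_eq_inner)

lemma inner_W_self_nonneg: "0 \<le> inner_W r u u"
  unfolding inner_W_self by (simp add: sum_nonneg)

lemma norm_W_nonneg: "0 \<le> norm_W r u"
  unfolding norm_W_def by (simp add: inner_W_self_nonneg)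

lemma norm_W_sq: "(norm_W r u)\<^sup>2 = inner_W r u u"
  unfolding norm_W_def by (simp add: inner_W_self_nonneg)

lemma inner_W_diff_self:
  "inner_W r (\<lambda>i. u i - v i) (\<lambda>i. u i - v i) = inner_W r u u + inner_W r v v - 2 * inner_W r u v"
  unfolding inner_W_def
  by (simp add: inner_diff_left inner_diff_right sum.distrib sum_subtractf inner_commute sum_distrib_left)

lemma inner_W_nu_W: "inner_W r (nu_W r u) (nu_W r v) = inner_W r u v / (norm_W r u * norm_W r v)"
  unfolding inner_W_def nu_W_def
  by (simp add: sum_divide_distrib) (intro sum.cong; simp add: field_simps)

lemma abs_inner_W_le: "\<bar>inner_W r u v\<bar> \<le> norm_W r u * norm_W r v"
proof -
  have "\<bar>inner_W r u v\<bar> \<le> (\<Sum>i<r. norm (u i) * norm (v i))"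
    unfolding inner_W_def by (intro sum_abs[THEN order_trans] sum_mono Cauchy_Schwarz_ineq2)
  also have "\<dots> \<le> L2_set (\<lambda>i. norm (u i)) {..<r} * L2_set (\<lambda>i. norm (v i)) {..<r}"
    using L2_set_mult_ineq[of "\<lambda>i. norm (u i)" "\<lambda>i. norm (v i)"] by simp
  finally show ?thesis
    by (simp add: norm_W_def inner_W_self L2_set_def)
qed

lemma abs_inner_W_nu_W_le_1: "\<bar>inner_W r (nu_W r u) (nu_W r v)\<bar> \<le> 1"
proof (cases "norm_W r u * norm_W r v = 0")
  case True
  then show ?thesis
    unfolding inner_W_nu_W True by simp
next
  case False
  moreover have "0 \<le> norm_W r u * norm_W r v"
    using norm_W_nonneg[of r u] norm_W_nonneg[of r v] by (rule mult_nonneg_nonneg)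
  ultimately have pos: "0 < norm_W r u * norm_W r v"
    by linarith
  with abs_inner_W_le[of r u v] show ?thesis
    by (simp add: inner_W_nu_W abs_divide pos_divide_le_eq)
qed

lemma inner_W_nu_W_ge:
  fixes u v :: "nat \<Rightarrow> 'a::euclidean_space"
  assumes m: "0 < m" "m \<le> inner_W r u u" "m \<le> inner_W r v v"
    and e: "inner_W r (\<lambda>i. u i - v i) (\<lambda>i. u i - v i) \<le> e"
  shows "1 - e / (2 * m) \<le> inner_W r (nu_W r u) (nu_W r v)"
proof -
  define p where "p = norm_W r u * norm_W r v"
  have "m = sqrt (m * m)"
    using m by simp
  also have "\<dots> \<le> sqrt (inner_W r u u * inner_W r v v)"
    using m by (intro real_sqrt_le_mono mult_mono) auto
  also have "\<dots> = p"
    by (simp add: p_def norm_W_def real_sqrt_mult)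
  finally have mp: "m \<le> p" .
  have "2 * p \<le> inner_W r u u + inner_W r v v"
    using sum_squares_bound[of "norm_W r u" "norm_W r v"] by (simp add: p_def norm_W_sq)
  then have diff: "p - inner_W r u v \<le> e / 2"
    using e inner_W_diff_self[of r u v] by simp
  have "0 \<le> e"
    using e inner_W_self_nonneg[of r "\<lambda>i. u i - v i"] by linarith
  have "1 - inner_W r u v / p = (p - inner_W r u v) / p"
    using m mp by (simp add: field_simps)
  also have "\<dots> \<le> e / 2 / p"
    using diff m mp by (intro divide_right_mono) auto
  also have "\<dots> \<le> e / 2 / m"
    using \<open>0 \<le> e\<close> m mp by (intro divide_left_mono) auto
  finally show ?thesis
    by (simp add: inner_W_nu_W p_def)
qed

lemma geodist_nu_W_le:
  fixes u v :: "nat \<Rightarrow> 'a::euclidean_space"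
  assumes "0 < m" "m \<le> inner_W r u u" "m \<le> inner_W r v v"
    and "inner_W r (\<lambda>i. u i - v i) (\<lambda>i. u i - v i) \<le> e"
  shows "geodist r (nu_W r u) (nu_W r v) \<le> arccos (max (-1) (1 - e / (2 * m)))"
  unfolding geodist_def
  using inner_W_nu_W_ge[OF assms] abs_inner_W_nu_W_le_1[of r u v]
  by (intro arccos_le_arccos) auto

lemma sqrt2_sin_half_arccos:
  assumes "-1 \<le> t" "t \<le> 1"
  shows "sqrt 2 * sin (arccos t / 2) = sqrt (1 - t)"
proof -
  define \<theta> where "\<theta> = arccos t"
  have "0 \<le> sin (\<theta> / 2)"
    using arccos_lbound[OF assms] arccos_ubound[OF assms] by (intro sin_ge_zero) (auto simp: \<theta>_def)
  moreover have "1 - t = 2 * (sin (\<theta> / 2))\<^sup>2"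
    using cos_double_sin[of "\<theta> / 2"] assms by (simp add: \<theta>_def)
  ultimately show ?thesis
    by (simp add: \<theta>_def real_sqrt_mult)
qed

lemma sqrt2_sin_half_mult_le:
  assumes "0 \<le> \<alpha>" "\<alpha> \<le> arccos (max (-1) (1 - d\<^sup>2 / k\<^sup>2))" "0 < k" "0 \<le> d"
  shows "sqrt 2 * sin (\<alpha> / 2) * k \<le> d"
proof -
  define t where "t = max (-1) (1 - d\<^sup>2 / k\<^sup>2)"
  have t: "-1 \<le> t" "t \<le> 1"
    using assms by (auto simp: t_def)
  have "sin (\<alpha> / 2) \<le> sin (arccos t / 2)"
    using assms t arccos_ubound[OF t] by (intro sin_monotone_2pi_le) (auto simp: t_def)
  then have "sqrt 2 * sin (\<alpha> / 2) * k \<le> sqrt (1 - t) * k"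
    using assms by (simp add: sqrt2_sin_half_arccos[OF t, symmetric])
  also have "\<dots> \<le> sqrt ((d / k)\<^sup>2) * k"
    using assms by (intro mult_right_mono real_sqrt_le_mono) (auto simp: t_def power_divide)
  also have "\<dots> = d"
    using assms by simp
  finally show ?thesis .
qed

lemma conf_simplex_Delta: "x \<in> conf_simplex r N \<Longrightarrow> i < r \<Longrightarrow> x i \<in> Delta N"
  unfolding conf_simplex_def sface_def by auto

lemma conf_simplex_nonempty:
  assumes "r \<le> N + 1"
  shows "conf_simplex r N \<noteq> {}"
proof -
  define x :: "nat \<Rightarrow> nat \<Rightarrow> real" where
    "x = (\<lambda>i. if i < r then (\<lambda>k. if k = i then 1 else 0) else (\<lambda>_. 0))"
  have "x \<in> conf_simplex r N"
    unfolding conf_simplex_def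
  proof (intro CollectI conjI allI impI exI[where x="\<lambda>i. {i}"])
    fix i assume i: "i < r"
    then have "i \<le> N"
      using assms by simp
    then show "is_face_index N {i}" and "x i \<in> sface N {i}"
      using i by (auto simp: is_face_index_def x_def sface_def Delta_def)
  qed (auto simp: x_def)
  then show ?thesis
    by blast
qed

lemma kappa_r_le:
  assumes "x \<in> conf_simplex r N"
  shows "kappa_r r N f \<le> (1 / real r) * sqrt (\<Sum>i<r. \<Sum>j<r. (norm (f (x i) - f (x j)))\<^sup>2)"
  unfolding kappa_r_def
  using assms by (intro cInf_lower imageI bdd_belowI[where m=0]) (auto intro!: divide_nonneg_nonneg sum_nonneg)

lemma kappa_r_nonneg:
  assumes "r \<le> N + 1"
  shows "0 \<le> kappa_r r N f"
  unfolding kappa_r_def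
  using conf_simplex_nonempty[OF assms] by (intro cInf_greatest) (auto intro!: divide_nonneg_nonneg sum_nonneg)

lemma inner_W_conf_map_self:
  assumes "0 < r"
  shows "inner_W r (conf_map r f x) (conf_map r f x)
       = (\<Sum>i<r. \<Sum>j<r. (norm (f (x i) - f (x j)))\<^sup>2) / (2 * real r)"
  using sum_norm_sub_mean_sq_eq_pairs[OF assms, of "\<lambda>i. f (x i)"]
  by (simp add: inner_W_self conf_map_def)

lemma kappa_r_sq_le_inner_W_conf_map:
  assumes "0 < r" "0 \<le> kappa_r r N f" "x \<in> conf_simplex r N"
  shows "real r * (kappa_r r N f)\<^sup>2 / 2 \<le> inner_W r (conf_map r f x) (conf_map r f x)"
proof -
  define S where "S = (\<Sum>i<r. \<Sum>j<r. (norm (f (x i) - f (x j)))\<^sup>2)"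
  have "0 \<le> S"
    by (simp add: S_def sum_nonneg)
  have "real r * kappa_r r N f \<le> sqrt S"
    using kappa_r_le[OF assms(3), of f] assms(1) by (simp add: S_def field_simps)
  then have "(real r * kappa_r r N f)\<^sup>2 \<le> (sqrt S)\<^sup>2"
    using assms(2) by (intro power_mono) auto
  then have "(real r * kappa_r r N f)\<^sup>2 \<le> S"
    using \<open>0 \<le> S\<close> by simp
  then show ?thesis
    using assms(1) by (simp add: inner_W_conf_map_self S_def power_mult_distrib field_simps power2_eq_square)
qed

lemma inner_W_conf_map_diff_le:
  assumes "0 < r" "\<And>i. i < r \<Longrightarrow> dist (f (y i)) (f (z i)) \<le> d"
  shows "inner_W r (\<lambda>i. conf_map r f y i - conf_map r f z i) (\<lambda>i. conf_map r f y i - conf_map r f z i)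
       \<le> real r * d\<^sup>2"
proof -
  define c where "c = (\<lambda>i. f (y i) - f (z i))"
  have "inner_W r (\<lambda>i. conf_map r f y i - conf_map r f z i) (\<lambda>i. conf_map r f y i - conf_map r f z i)
      = (\<Sum>i<r. (norm (c i - (1 / real r) *\<^sub>R (\<Sum>j<r. c j)))\<^sup>2)"
    unfolding inner_W_self conf_map_def c_def
    by (intro sum.cong) (auto simp: sum_subtractf algebra_simps)
  also have "\<dots> \<le> (\<Sum>i<r. (norm (c i))\<^sup>2)"
    by (rule sum_norm_sub_mean_sq_le[OF assms(1)])
  also have "\<dots> \<le> (\<Sum>i<r. d\<^sup>2)"
    using assms(2) by (intro sum_mono power_mono) (auto simp: c_def dist_norm)
  finally show ?thesis
    by simp
qed

lemma geodist_conf_map_le: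
  assumes "0 < r" "0 < kappa_r r N f" "y \<in> conf_simplex r N" "z \<in> conf_simplex r N"
    and "\<And>i. i < r \<Longrightarrow> dist (f (y i)) (f (z i)) \<le> d"
  shows "geodist r (nu_W r (conf_map r f y)) (nu_W r (conf_map r f z))
       \<le> arccos (max (-1) (1 - d\<^sup>2 / (kappa_r r N f)\<^sup>2))"
proof -
  define m where "m = real r * (kappa_r r N f)\<^sup>2 / 2"
  have "geodist r (nu_W r (conf_map r f y)) (nu_W r (conf_map r f z))
      \<le> arccos (max (-1) (1 - real r * d\<^sup>2 / (2 * m)))"
    unfolding m_def using assms
    by (intro geodist_nu_W_le inner_W_conf_map_diff_le kappa_r_sq_le_inner_W_conf_map) auto
  also have "real r * d\<^sup>2 / (2 * m) = d\<^sup>2 / (kappa_r r N f)\<^sup>2"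
    using assms(1) by (simp add: m_def)
  finally show ?thesis .
qed

lemma nbhd_components_diam_le:
  fixes S :: "(nat \<Rightarrow> 'b::topological_space) set"
  assumes "locally_diam_le (top_of_set A) dm f d" "x \<in> S" "\<forall>y\<in>S. \<forall>i<r. y i \<in> A"
  obtains V where "openin (top_of_set S) V" "x \<in> V"
    "\<And>y z i. y \<in> V \<Longrightarrow> z \<in> V \<Longrightarrow> i < r \<Longrightarrow> dm (f (y i)) (f (z i)) \<le> d"
proof -
  have "\<forall>i\<in>{..<r}. \<exists>T. open T \<and> x i \<in> T \<and> (\<forall>a\<in>A \<inter> T. \<forall>b\<in>A \<inter> T. dm (f a) (f b) \<le> d)"
  proof
    fix i assume "i \<in> {..<r}"
    then have "x i \<in> A"
      using assms(2,3) by auto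
    with assms(1) obtain U where "openin (top_of_set A) U" "x i \<in> U"
        "\<forall>a\<in>U. \<forall>b\<in>U. dm (f a) (f b) \<le> d"
      unfolding locally_diam_le_def by auto
    then show "\<exists>T. open T \<and> x i \<in> T \<and> (\<forall>a\<in>A \<inter> T. \<forall>b\<in>A \<inter> T. dm (f a) (f b) \<le> d)"
      by (auto simp: openin_open)
  qed
  then obtain T where T: "\<And>i. i < r \<Longrightarrow> open (T i) \<and> x i \<in> T i \<and>
      (\<forall>a\<in>A \<inter> T i. \<forall>b\<in>A \<inter> T i. dm (f a) (f b) \<le> d)"
    by (auto dest!: bchoice)
  define V where "V = S \<inter> (\<Inter>i<r. (\<lambda>y. y i) -` T i)"
  show thesis
  proof
    show "openin (top_of_set S) V"
      unfolding V_def openin_open using T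
      by (intro exI[where x="\<Inter>i<r. (\<lambda>y. y i) -` T i"] conjI refl open_INT ballI open_vimage) auto
    show "x \<in> V"
      using assms(2) T by (auto simp: V_def)
    show "dm (f (y i)) (f (z i)) \<le> d" if "y \<in> V" "z \<in> V" "i < r" for y z i
      using that T[of i] assms(3) by (auto simp: V_def)
  qed
qed

lemma alpha_r_nonneg: "0 \<le> alpha_r r N f"
  unfolding alpha_r_def using delta_gen_nonneg by (rule real_of_ereal_pos)

lemma alpha_r_le_arccos:
  assumes "0 < r" "0 < kappa_r r N f" "locally_diam_le (top_of_set (Delta N)) dist f d"
  shows "alpha_r r N f \<le> arccos (max (-1) (1 - d\<^sup>2 / (kappa_r r N f)\<^sup>2))"
proof -
  define \<theta> where "\<theta> = arccos (max (-1) (1 - d\<^sup>2 / (kappa_r r N f)\<^sup>2))"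
  have "0 \<le> \<theta>"
    unfolding \<theta>_def by (intro arccos_lbound) auto
  moreover have "locally_diam_le (top_of_set (conf_simplex r N)) (geodist r) (nu_W r \<circ> conf_map r f) \<theta>"
    unfolding locally_diam_le_def
  proof (clarsimp)
    fix x assume x: "x \<in> conf_simplex r N"
    have components: "\<forall>y\<in>conf_simplex r N. \<forall>i<r. y i \<in> Delta N"
      by (blast intro: conf_simplex_Delta)
    show "\<exists>U. openin (top_of_set (conf_simplex r N)) U \<and> x \<in> U \<and>
        (\<forall>a\<in>U. \<forall>b\<in>U. geodist r (nu_W r (conf_map r f a)) (nu_W r (conf_map r f b)) \<le> \<theta>)"
    proof (rule nbhd_components_diam_le[OF assms(3) x components])
      fix V assume V: "openin (top_of_set (conf_simplex r N)) V" "x \<in> V"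
        and close: "\<And>y z i. y \<in> V \<Longrightarrow> z \<in> V \<Longrightarrow> i < r \<Longrightarrow> dist (f (y i)) (f (z i)) \<le> d"
      have "geodist r (nu_W r (conf_map r f a)) (nu_W r (conf_map r f b)) \<le> \<theta>"
        if "a \<in> V" "b \<in> V" for a b
        unfolding \<theta>_def using that openin_imp_subset[OF V(1)]
        by (intro geodist_conf_map_le assms(1,2) close) auto
      with V show ?thesis
        by blast
    qed
  qed
  ultimately have "delta_gen (top_of_set (conf_simplex r N)) (geodist r) (nu_W r \<circ> conf_map r f) \<le> \<theta>"
    by (rule delta_gen_le)
  with \<open>0 \<le> \<theta>\<close> show ?thesis
    unfolding alpha_r_def \<theta>_def[symmetric]
    by (cases "delta_gen (top_of_set (conf_simplex r N)) (geodist r) (nu_W r \<circ> conf_map r f)") auto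
qed

theorem theorem4p13:
  fixes r N :: nat and f :: "(nat \<Rightarrow> real) \<Rightarrow> 'a::euclidean_space"
  assumes "2 \<le> r" and "r \<le> N + 1"
    and "almost_r_injective r N f"
  shows "delta_fun N f \<ge> ereal (sqrt 2 * sin (alpha_r r N f / 2) * kappa_r r N f)"
  unfolding delta_fun_def
proof (rule ereal_le_delta_gen)
  fix d assume "0 \<le> d" and f_local: "locally_diam_le (top_of_set (Delta N)) dist f d"
  have "0 < r"
    using assms(1) by simp
  show "sqrt 2 * sin (alpha_r r N f / 2) * kappa_r r N f \<le> d"
  proof (cases "kappa_r r N f = 0")
    case False
    with kappa_r_nonneg[OF assms(2), of f] have "0 < kappa_r r N f"
      by simp
    with \<open>0 \<le> d\<close> show ?thesis
      by (intro sqrt2_sin_half_mult_le alpha_r_nonneg alpha_r_le_arccos[OF \<open>0 < r\<close> _ f_local])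
  qed (simp add: \<open>0 \<le> d\<close>)
qed

end
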